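(* Let $a,b$ be distinct real numbers, let $x_0\in\mathbb{R}$, and let $(\lambda_n)_{n\in\mathbb{N}}$ be a sequence with $\lambda_n\in\,]1,2[$ for all $n$, $\lambda_n\to 2$, and $\sum_{n}(2-\lambda_n)<+\infty$. Define the sequence $(x_n)_{n\in\mathbb{N}}$ of alternating relaxed projections onto $\{a\}$ and $\{b\}$ by \[ x_{2n+1}:=(1-\lambda_{2n})x_{2n}+\lambda_{2n}a,\qquad x_{2n+2}:=(1-\lambda_{2n+1})x_{2n+1}+\lambda_{2n+1}b . \] Then $x_{2n}\to \operatorname{sign}(b-a)\,\infty$ and $x_{2n+1}\to\operatorname{sign}(a-b)\,\infty$; in particular $|x_n|\to+\infty$. *)

theory Defs
  imports "HOL-Analysis.Analysis"
begin

end

theory Submission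
  imports Defs "HOL-Real_Asymp.Real_Asymp" "HOL-Probability.Characteristic_Functions"
begin

(* With d = b - a, two consecutive relaxed projections act on x_2n - a as the affine map
   e \<mapsto> c e + \<mu> d with slope c = (\<lambda>_2n+1 - 1)(\<lambda>_2n - 1) in [0,1] and \<mu> > 1.
   Since 1 - c \<le> (2 - \<lambda>_2n) + (2 - \<lambda>_2n+1), the defects 1 - c are summable; once their tail
   sum is below 1/2, m further steps lose at most half of the m pushes d, so x_2n - a grows
   linearly. The odd iterates are the reflections x_2n+1 - a = -(\<lambda>_2n - 1)(x_2n - a) with
   \<lambda>_2n - 1 \<rightarrow> 1, so they diverge to the other side. The case b < a is the mirror image
   under x \<mapsto> -x. *)

lemma affine_recurrence_lower_bound:
  fixes c e :: "nat \<Rightarrow> real"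
  assumes c_nonneg: "\<And>n. 0 \<le> c n" and c_le_1: "\<And>n. c n \<le> 1" and "0 \<le> d"
    and step: "\<And>n. c n * e n + d \<le> e (Suc n)"
  shows "real m * d * (1 - (\<Sum>k<m. 1 - c k)) - \<bar>e 0\<bar> \<le> e m"
proof (induction m)
  case 0
  then show ?case by simp
next
  case (Suc m)
  define s where "s = (\<Sum>k<m. 1 - c k)"
  have s_nonneg: "0 \<le> s"
    unfolding s_def using c_le_1 by (simp add: sum_nonneg)
  have "c m * (real m * d * (1 - s) - \<bar>e 0\<bar>) + d \<le> e (Suc m)"
    using mult_left_mono[OF Suc[folded s_def] c_nonneg[of m]] step[of m] by linarith
  moreover have "real (Suc m) * d * (1 - (s + (1 - c m))) - \<bar>e 0\<bar>
      \<le> c m * (real m * d * (1 - s) - \<bar>e 0\<bar>) + d"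
  proof -
    have "0 \<le> (1 - c m) * (real m * d * s + d + \<bar>e 0\<bar>) + d * s"
      using c_le_1[of m] s_nonneg \<open>0 \<le> d\<close> by simp
    then show ?thesis by (simp add: algebra_simps)
  qed
  ultimately show ?case by (simp add: s_def)
qed

lemma affine_recurrence_tendsto_at_top:
  fixes c e :: "nat \<Rightarrow> real"
  assumes c_nonneg: "\<And>n. 0 \<le> c n" and c_le_1: "\<And>n. c n \<le> 1" and "0 < d"
    and summable: "summable (\<lambda>n. 1 - c n)"
    and step: "\<And>n. c n * e n + d \<le> e (Suc n)"
  shows "filterlim e at_top sequentially"
proof -
  obtain N where N: "norm (\<Sum>k. 1 - c (k + N)) < 1/2"
    using suminf_exist_split[OF _ summable, of "1/2"] by auto
  have linear_bound: "real m * d / 2 - \<bar>e N\<bar> \<le> e (m + N)" for m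
  proof -
    have "(\<Sum>k<m. 1 - c (k + N)) \<le> (\<Sum>k. 1 - c (k + N))"
      using c_le_1 summable_ignore_initial_segment[OF summable, of N]
      by (intro sum_le_suminf) auto
    with N have "1/2 \<le> 1 - (\<Sum>k<m. 1 - c (k + N))"
      by simp
    then have "real m * d / 2 \<le> real m * d * (1 - (\<Sum>k<m. 1 - c (k + N)))"
      using mult_left_mono[of "1/2" _ "real m * d"] \<open>0 < d\<close> by simp
    moreover have "real m * d * (1 - (\<Sum>k<m. 1 - c (k + N))) - \<bar>e N\<bar> \<le> e (m + N)"
      using affine_recurrence_lower_bound[of "\<lambda>k. c (k + N)" d "\<lambda>k. e (k + N)"]
        c_nonneg c_le_1 step \<open>0 < d\<close> by simp
    ultimately show ?thesis by linarith
  qed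
  have "filterlim (\<lambda>m. real m * d / 2 - \<bar>e N\<bar>) at_top sequentially"
    using \<open>0 < d\<close> by real_asymp
  then have "filterlim (\<lambda>m. e (m + N)) at_top sequentially"
    by (rule filterlim_at_top_mono) (simp add: linear_bound)
  then show ?thesis
    unfolding filterlim_iff using eventually_sequentially_seg[where k = N] by blast
qed

lemma summable_pairs:
  fixes f :: "nat \<Rightarrow> 'a::real_normed_vector"
  assumes "summable f"
  shows "summable (\<lambda>n. f (2 * n) + f (2 * n + 1))"
proof -
  have "(\<lambda>n. sum f {n * 2..<n * 2 + 2}) sums suminf f"
    using sums_group[OF summable_sums[OF assms], of 2] by simp
  then show ?thesis
    by (simp add: sums_iff numeral_2_eq_2 mult.commute)
qed

lemma filterlim_sequentially_even_odd:
  assumes "filterlim (\<lambda>n. f (2 * n)) F sequentially"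
    and "filterlim (\<lambda>n. f (2 * n + 1)) F sequentially"
  shows "filterlim f F sequentially"
  using assms by (auto simp: filterlim_iff intro: sequentially_even_odd)

lemma filterlim_abs_at_top_even_odd:
  fixes x :: "nat \<Rightarrow> real" and F G :: "real filter"
  assumes "filterlim (\<lambda>n. x (2*n)) F sequentially" and "F \<le> at_infinity"
    and "filterlim (\<lambda>n. x (2*n+1)) G sequentially" and "G \<le> at_infinity"
  shows "filterlim (\<lambda>n. \<bar>x n\<bar>) at_top sequentially"
proof -
  have "filterlim x at_infinity sequentially"
    by (rule filterlim_sequentially_even_odd)
      (use filterlim_mono assms in blast)+
  from filterlim_at_infinity_imp_norm_at_top[OF this] show ?thesis
    by simp
qed

lemma relaxed_projection_pair:
  fixes x a b l m :: real
  shows "(1 - m) * ((1 - l) * x + l * a) + m * b - a = (m - 1) * (l - 1) * (x - a) + m * (b - a)"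
  by (simp add: algebra_simps)

lemma summable_relaxation_pair_defect:
  fixes lam :: "nat \<Rightarrow> real"
  assumes "\<And>n. 1 \<le> lam n" and "\<And>n. lam n \<le> 2" and "summable (\<lambda>n. 2 - lam n)"
  shows "summable (\<lambda>n. 1 - (lam (2*n+1) - 1) * (lam (2*n) - 1))"
proof (rule summable_comparison_test'[OF summable_pairs[OF assms(3)]])
  fix n
  have "1 - (lam (2*n+1) - 1) * (lam (2*n) - 1)
      = (2 - lam (2*n)) + (2 - lam (2*n+1)) - (2 - lam (2*n)) * (2 - lam (2*n+1))"
    by (simp add: algebra_simps)
  moreover have "(lam (2*n+1) - 1) * (lam (2*n) - 1) \<le> 1"
    using assms(1,2) by (simp add: mult_le_one)
  ultimately show "norm (1 - (lam (2*n+1) - 1) * (lam (2*n) - 1))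
      \<le> (2 - lam (2*n)) + (2 - lam (2*n+1))"
    using assms(1,2)[of "2*n"] assms(1,2)[of "2*n+1"] by simp
qed

lemma alternating_relaxed_projections_diverge:
  fixes a b :: real and lam x :: "nat \<Rightarrow> real"
  assumes "a < b"
    and lam_bounds: "\<And>n. 1 < lam n \<and> lam n < 2"
    and "lam \<longlonglongrightarrow> 2"
    and "summable (\<lambda>n. 2 - lam n)"
    and odd_step: "\<And>n. x (2*n+1) = (1 - lam (2*n)) * x (2*n) + lam (2*n) * a"
    and even_step: "\<And>n. x (2*n+2) = (1 - lam (2*n+1)) * x (2*n+1) + lam (2*n+1) * b"
  shows "filterlim (\<lambda>n. x (2*n)) at_top sequentially"
    and "filterlim (\<lambda>n. x (2*n+1)) at_bot sequentially"
proof -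
  define c where "c n = (lam (2*n+1) - 1) * (lam (2*n) - 1)" for n
  have c_bounds: "0 \<le> c n" "c n \<le> 1" for n
    using lam_bounds[of "2*n"] lam_bounds[of "2*n+1"]
    by (auto simp: c_def mult_le_one)
  have "summable (\<lambda>n. 1 - c n)"
    unfolding c_def using lam_bounds \<open>summable (\<lambda>n. 2 - lam n)\<close>
    by (intro summable_relaxation_pair_defect) (auto intro: less_imp_le)
  moreover have "c n * (x (2*n) - a) + (b - a) \<le> x (2 * Suc n) - a" for n
  proof -
    have "x (2 * Suc n) - a
        = (1 - lam (2*n+1)) * ((1 - lam (2*n)) * x (2*n) + lam (2*n) * a) + lam (2*n+1) * b - a"
      using even_step[of n] odd_step[of n] by simp
    also have "\<dots> = c n * (x (2*n) - a) + lam (2*n+1) * (b - a)"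
      unfolding c_def by (rule relaxed_projection_pair)
    finally have "x (2 * Suc n) - a = c n * (x (2*n) - a) + lam (2*n+1) * (b - a)" .
    then show ?thesis
      using lam_bounds[of "2*n+1"] \<open>a < b\<close> by simp
  qed
  ultimately have even_shifted: "filterlim (\<lambda>n. x (2*n) - a) at_top sequentially"
    using affine_recurrence_tendsto_at_top[of c "b - a"] c_bounds \<open>a < b\<close> by simp
  then show "filterlim (\<lambda>n. x (2*n)) at_top sequentially"
    using filterlim_tendsto_add_at_top[OF tendsto_const even_shifted, of a] by simp
  have "(\<lambda>n. lam (2*n)) \<longlonglongrightarrow> 2"
    by (rule filterlim_compose[OF \<open>lam \<longlonglongrightarrow> 2\<close> mult_nat_left_at_top]) simp
  then have "(\<lambda>n. lam (2*n) - 1) \<longlonglongrightarrow> 2 - 1"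
    by (intro tendsto_diff tendsto_const)
  from filterlim_tendsto_pos_mult_at_top[OF this _ even_shifted]
  have "filterlim (\<lambda>n. (lam (2*n) - 1) * (x (2*n) - a)) at_top sequentially"
    by simp
  from filterlim_tendsto_add_at_top[OF tendsto_const this, of "-a"]
  have "filterlim (\<lambda>n. (lam (2*n) - 1) * (x (2*n) - a) - a) at_top sequentially"
    by simp
  moreover have "(lam (2*n) - 1) * (x (2*n) - a) - a = - x (2*n+1)" for n
    using odd_step[of n] by (simp add: algebra_simps)
  ultimately show "filterlim (\<lambda>n. x (2*n+1)) at_bot sequentially"
    by (simp add: filterlim_uminus_at_bot)
qed

theorem mainTheorem4:
  fixes a b x0 :: real and lam x :: "nat \<Rightarrow> real"
  assumes "a \<noteq> b"
    and "\<And>n. 1 < lam n \<and> lam n < 2"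
    and "lam \<longlonglongrightarrow> 2"
    and "summable (\<lambda>n. 2 - lam n)"
    and "x 0 = x0"
    and "\<And>n. x (2*n+1) = (1 - lam (2*n)) * x (2*n) + lam (2*n) * a"
    and "\<And>n. x (2*n+2) = (1 - lam (2*n+1)) * x (2*n+1) + lam (2*n+1) * b"
  shows "(if a < b then filterlim (\<lambda>n. x (2*n)) at_top sequentially
                   else filterlim (\<lambda>n. x (2*n)) at_bot sequentially)
       \<and> (if b < a then filterlim (\<lambda>n. x (2*n+1)) at_top sequentially
                   else filterlim (\<lambda>n. x (2*n+1)) at_bot sequentially)
       \<and> filterlim (\<lambda>n. \<bar>x n\<bar>) at_top sequentially"
proof (cases "a < b")
  case True
  note diverge = alternating_relaxed_projections_diverge[OF True assms(2-4,6,7)]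
  have "filterlim (\<lambda>n. \<bar>x n\<bar>) at_top sequentially"
    by (rule filterlim_abs_at_top_even_odd[OF diverge(1) at_top_le_at_infinity
          diverge(2) at_bot_le_at_infinity])
  with True diverge show ?thesis by simp
next
  case False
  with \<open>a \<noteq> b\<close> have "- a < - b" by simp
  have "- x (2*n+1) = (1 - lam (2*n)) * - x (2*n) + lam (2*n) * - a"
    and "- x (2*n+2) = (1 - lam (2*n+1)) * - x (2*n+1) + lam (2*n+1) * - b" for n
    using assms(6,7)[of n] by (simp_all add: algebra_simps)
  note diverge = alternating_relaxed_projections_diverge[OF \<open>- a < - b\<close> assms(2-4) this]
  have even: "filterlim (\<lambda>n. x (2*n)) at_bot sequentially"
    using diverge(1) by (simp add: filterlim_uminus_at_bot)
  have odd: "filterlim (\<lambda>n. x (2*n+1)) at_top sequentially"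
    using diverge(2) by (simp add: filterlim_uminus_at_top)
  have "filterlim (\<lambda>n. \<bar>x n\<bar>) at_top sequentially"
    by (rule filterlim_abs_at_top_even_odd[OF even at_bot_le_at_infinity
          odd at_top_le_at_infinity])
  with False \<open>- a < - b\<close> even odd show ?thesis by simp
qed

end
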